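(* Let $\ell\ge2$, let $\mathcal R$ be an $\ell$-vertex rule with associated graphs $(G(m))_{m\ge0}$ on $[n]$, and let $0<\alpha\le1$. Let $\mathcal C(\alpha)$ denote the event that for all integers $0\le m\le n^2$ and $1\le k\le \frac{\alpha}{16}\frac{n}{\log n}$ the following holds: if $N_{\ge k}(m)\ge\alpha n$, then $L_1(m+\Delta)>\frac{\alpha}{\ell^2}n$, where $\Delta=\bigl\lceil \frac{4}{\alpha^{\ell-1}}\frac{n}{k}\bigr\rceil$. Then $\Pr(\mathcal C(\alpha))\ge 1-n^{-1}$.
   Context: $\ell$-vertex rule: fix an integer $\ell\ge2$. For each $n$, let $(\underline v_1,\underline v_2,\dots)$ be an i.i.d. sequence, where each $\underline v_m=(v_{m,1},\dots,v_{m,\ell})$ consists of $\ell$ vertices of $[n]$ chosen independently and uniformly at random. There is a filtration $\mathcal F_0\subseteq\mathcal F_1\subseteq\cdots$ such that $\underline v_m$ is $\mathcal F_m$-measurable and independent of $\mathcal F_{m-1}$. An $\ell$-vertex rule is a random sequence of graphs $(G(m))_{m\ge0}$ on $[n]$ such that: (i) $G(0)$ is empty; (ii) for $m\ge1$, $G(m)=G(m-1)\cup E_m$ where $E_m$ is a (possibly empty) $\mathcal F_m$-measurable set of edges each joining two vertices of $\underline v_m$; (iii) if the $\ell$ vertices of $\underline v_m$ lie in $\ell$ distinct components of $G(m-1)$, then $E_m\ne\varnothing$. Notation: $L_1(m)$ is the number of vertices in a largest component of $G(m)$; $N_{\ge k}(m)$ is the number of vertices of $G(m)$ in components with at least $k$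 vertices; $\log$ is the natural logarithm. *)

theory Defs
  imports "HOL-Probability.Probability"
begin

text \<open>Graphs on vertex set [n] = {1..n} are represented by their edge sets,
  an edge being a two-element set of vertices.\<close>

definition adj :: "nat set set \<Rightarrow> (nat \<times> nat) set" where
  "adj G = {(a, b). {a, b} \<in> G}"

definition comp :: "nat set set \<Rightarrow> nat \<Rightarrow> nat set" where
  "comp G x = {y. (x, y) \<in> (adj G)\<^sup>*}"

definition L1 :: "nat \<Rightarrow> nat set set \<Rightarrow> nat" where
  "L1 n G = Max ((\<lambda>x. card (comp G x)) ` {1..n})"

definition Nge :: "nat \<Rightarrow> nat set set \<Rightarrow> nat \<Rightarrow> nat" where
  "Nge n G k = card {x \<in> {1..n}. card (comp G x) \<ge> k}"

definition Gr :: "(nat \<Rightarrow> 'a \<Rightarrow> nat set set) \<Rightarrow> nat \<Rightarrow> 'a \<Rightarrow> nat set set" where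
  "Gr E m \<omega> = (\<Union>i\<in>{1..m}. E i \<omega>)"

text \<open>An l-vertex rule on [n]: probability space M, filtration F (F 0 \<subseteq> F 1 \<subseteq> ...),
  tuples v m (m >= 1) of l uniform vertices, F m-measurable and independent of F (m-1),
  and F m-measurable edge sets E m, each edge joining two vertices of v m,
  nonempty whenever the l vertices lie in l distinct components of G(m-1).\<close>
definition ell_vertex_rule ::
  "'a measure \<Rightarrow> nat \<Rightarrow> nat \<Rightarrow> (nat \<Rightarrow> 'a measure) \<Rightarrow> (nat \<Rightarrow> 'a \<Rightarrow> nat list)
     \<Rightarrow> (nat \<Rightarrow> 'a \<Rightarrow> nat set set) \<Rightarrow> bool" where
  "ell_vertex_rule M l n F v E \<longleftrightarrow>
     prob_space M \<and>
     (\<forall>m. subalgebra M (F m)) \<and>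
     (\<forall>m. sets (F m) \<subseteq> sets (F (Suc m))) \<and>
     (\<forall>m\<ge>1. v m \<in> measurable (F m) (count_space UNIV)) \<and>
     (\<forall>m\<ge>1. \<forall>\<omega>\<in>space M. length (v m \<omega>) = l \<and> set (v m \<omega>) \<subseteq> {1..n}) \<and>
     (\<forall>m\<ge>1. \<forall>t. length t = l \<and> set t \<subseteq> {1..n} \<longrightarrow>
         measure M {\<omega>\<in>space M. v m \<omega> = t} = 1 / real n ^ l) \<and>
     (\<forall>m\<ge>1. \<forall>A\<in>sets (F (m - 1)). \<forall>t.
         measure M (A \<inter> {\<omega>\<in>space M. v m \<omega> = t})
           = measure M A * measure M {\<omega>\<in>space M. v m \<omega> = t}) \<and>
     (\<forall>m\<ge>1. E m \<in> measurable (F m) (count_space UNIV)) \<and>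
     (\<forall>m\<ge>1. \<forall>\<omega>\<in>space M. \<forall>e\<in>E m \<omega>.
         \<exists>x y. x \<in> set (v m \<omega>) \<and> y \<in> set (v m \<omega>) \<and> x \<noteq> y \<and> e = {x, y}) \<and>
     (\<forall>m\<ge>1. \<forall>\<omega>\<in>space M.
         (\<forall>i<l. \<forall>j<l. i \<noteq> j \<longrightarrow> (v m \<omega> ! i, v m \<omega> ! j) \<notin> (adj (Gr E (m - 1) \<omega>))\<^sup>*)
         \<longrightarrow> E m \<omega> \<noteq> {})"

definition event_C :: "nat \<Rightarrow> nat \<Rightarrow> real \<Rightarrow> (nat \<Rightarrow> 'a \<Rightarrow> nat set set) \<Rightarrow> 'a \<Rightarrow> bool" where
  "event_C n l \<alpha> E \<omega> \<longleftrightarrow>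
     (\<forall>m k. m \<le> n ^ 2 \<and> 1 \<le> k \<and> real k \<le> \<alpha> / 16 * (real n / ln (real n))
        \<and> real (Nge n (Gr E m \<omega>) k) \<ge> \<alpha> * real n
        \<longrightarrow> real (L1 n (Gr E (m + nat \<lceil>4 / \<alpha> ^ (l - 1) * (real n / real k)\<rceil>) \<omega>))
              > \<alpha> / real l ^ 2 * real n)"

end

theory Submission
  imports Defs
begin

text \<open>Fix \<open>m\<close> and \<open>k\<close>, and let \<open>W\<close> be the set of vertices in components of size at least \<open>k\<close>
  at time \<open>m\<close>; at most \<open>|W|/k\<close> components meet \<open>W\<close>. While \<open>L1 \<le> \<alpha> n / l\<^sup>2\<close>, the components
  are so small that the fresh \<open>l\<close>-tuple lies in \<open>W\<close> with its entries in distinct components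
  with probability at least \<open>p = (|W|/n)^l / 2\<close>, and then the rule has to merge two components
  meeting \<open>W\<close>. This can happen fewer than \<open>|W|/k\<close> times, so \<open>L1\<close> staying small for
  \<open>\<Delta>\<close> steps costs probability at most \<open>2^(|W|/k) (1 - p/2)^\<Delta> \<le> n^-4\<close>, which is proved with a
  supermartingale. A union bound over the at most \<open>n\<^sup>3\<close> pairs \<open>(m, k)\<close> concludes.\<close>

lemma adj_sym: "(a, b) \<in> adj G \<longleftrightarrow> (b, a) \<in> adj G"
  by (auto simp: adj_def insert_commute)

lemma rtrancl_adj_sym: "(a, b) \<in> (adj G)\<^sup>* \<Longrightarrow> (b, a) \<in> (adj G)\<^sup>*"
proof (induction rule: rtrancl_induct)
  case (step y z)
  then show ?case
    using adj_sym by (meson converse_rtrancl_into_rtrancl)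
qed simp

lemma rtrancl_adj_mono: "G \<subseteq> G' \<Longrightarrow> (adj G)\<^sup>* \<subseteq> (adj G')\<^sup>*"
  by (intro rtrancl_mono) (auto simp: adj_def)

lemma comp_mono: "G \<subseteq> G' \<Longrightarrow> comp G x \<subseteq> comp G' x"
  using rtrancl_adj_mono by (auto simp: comp_def)

lemma comp_refl: "x \<in> comp G x"
  by (simp add: comp_def)

lemma comp_eq_if_mem: "y \<in> comp G x \<Longrightarrow> comp G y = comp G x"
  unfolding comp_def using rtrancl_adj_sym by (auto intro: rtrancl_trans)

lemma comp_subset_insert:
  assumes "\<forall>e\<in>G. e \<subseteq> V"
  shows "comp G x \<subseteq> insert x V"
proof
  fix y assume "y \<in> comp G x"
  then have "(x, y) \<in> (adj G)\<^sup>*" by (simp add: comp_def)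
  then show "y \<in> insert x V"
    by (induction rule: rtrancl_induct) (use assms in \<open>auto simp: adj_def\<close>)
qed

lemma finite_comp: "\<forall>e\<in>G. e \<subseteq> {1..n} \<Longrightarrow> finite (comp G x)"
  using comp_subset_insert[of G "{1..n}" x] finite_subset by blast

lemma comp_subset_vertices: "\<forall>e\<in>G. e \<subseteq> {1..n} \<Longrightarrow> x \<in> {1..n} \<Longrightarrow> comp G x \<subseteq> {1..n}"
  using comp_subset_insert[of G "{1..n}" x] by blast

lemma card_comp_le_L1: "x \<in> {1..n} \<Longrightarrow> card (comp G x) \<le> L1 n G"
  unfolding L1_def by (intro Max_ge) auto

lemma L1_mono:
  assumes "G \<subseteq> G'" "\<forall>e\<in>G'. e \<subseteq> {1..n}" "n \<ge> 1"
  shows "L1 n G \<le> L1 n G'"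
proof -
  have "card (comp G x) \<le> L1 n G'" if x: "x \<in> {1..n}" for x
  proof -
    have "card (comp G x) \<le> card (comp G' x)"
      by (intro card_mono finite_comp[OF assms(2)] comp_mono assms(1))
    also have "\<dots> \<le> L1 n G'" using card_comp_le_L1[OF x] .
    finally show ?thesis .
  qed
  then show ?thesis unfolding L1_def using assms(3) by (subst Max_le_iff) auto
qed

lemma Gr_Suc: "Gr E (Suc j) \<omega> = Gr E j \<omega> \<union> E (Suc j) \<omega>"
  unfolding Gr_def using atLeastAtMostSuc_conv[of 1 j] by (simp add: Un_commute)

lemma Gr_mono: "i \<le> j \<Longrightarrow> Gr E i \<omega> \<subseteq> Gr E j \<omega>"
  unfolding Gr_def by (rule UN_mono) auto

lemma comp_eq_if_rtrancl: "(a, b) \<in> (adj G)\<^sup>* \<Longrightarrow> comp G a = comp G b"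
  using comp_eq_if_mem[of b G a] by (simp add: comp_def)

lemma comp_supergraph_eq_UN:
  assumes "G \<subseteq> G'"
  shows "comp G' x = (\<Union>y\<in>comp G x. comp G' y)"
proof -
  have "comp G' y = comp G' x" if "y \<in> comp G x" for y
    using that comp_mono[OF assms] comp_eq_if_mem by blast
  then show ?thesis using comp_refl[of x G] by blast
qed

definition comps_meeting :: "nat set \<Rightarrow> nat set set \<Rightarrow> nat" where
  "comps_meeting W G = card (comp G ` W)"

lemma comp_image_supergraph:
  assumes "G \<subseteq> G'"
  shows "comp G' ` W = (\<lambda>C. \<Union>y\<in>C. comp G' y) ` comp G ` W"
  unfolding image_image by (rule image_cong[OF refl comp_supergraph_eq_UN[OF assms]])

lemma comps_meeting_antimono:
  assumes "G \<subseteq> G'" "finite W"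
  shows "comps_meeting W G' \<le> comps_meeting W G"
  unfolding comps_meeting_def comp_image_supergraph[OF assms(1), of W]
  using assms(2) by (intro card_image_le) simp

lemma comps_meeting_less:
  assumes "G \<subseteq> G'" "finite W" "a \<in> W" "b \<in> W"
    and "comp G a \<noteq> comp G b" "comp G' a = comp G' b"
  shows "comps_meeting W G' < comps_meeting W G"
proof -
  let ?f = "\<lambda>C. \<Union>y\<in>C. comp G' y" and ?A = "comp G ` W"
  have "?f (comp G a) = ?f (comp G b)"
    using assms(6) comp_supergraph_eq_UN[OF assms(1), of a] comp_supergraph_eq_UN[OF assms(1), of b]
    by argo
  then have "\<not> inj_on ?f ?A"
    using assms(3-5) by (meson image_eqI inj_onD)
  then have "card (?f ` ?A) < card ?A"
    using assms(2) card_image_le[of ?A ?f] by (simp add: inj_on_iff_eq_card)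
  then show ?thesis
    unfolding comps_meeting_def comp_image_supergraph[OF assms(1), of W] .
qed

lemma comps_meeting_pos: "finite W \<Longrightarrow> W \<noteq> {} \<Longrightarrow> comps_meeting W G \<ge> 1"
  unfolding comps_meeting_def by (simp add: Suc_le_eq card_gt_0_iff)

lemma comps_meeting_mult_le_card:
  assumes edges: "\<forall>e\<in>G. e \<subseteq> {1..n}"
    and W: "W = {x\<in>{1..n}. k \<le> card (comp G x)}"
  shows "comps_meeting W G * k \<le> card W"
proof -
  let ?C = "comp G ` W"
  have comp_subset_W: "comp G x \<subseteq> W" if x: "x \<in> W" for x
  proof
    fix y assume y: "y \<in> comp G x"
    have "x \<in> {1..n}" using x W by simp
    then have "y \<in> {1..n}" using comp_subset_vertices[OF edges] y by blast
    then show "y \<in> W" using comp_eq_if_mem[OF y] x W by simp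
  qed
  have finite_W: "finite W" using W by simp
  have "pairwise disjnt ?C"
  proof (rule pairwiseI)
    fix A B assume "A \<in> ?C" "B \<in> ?C" "A \<noteq> B"
    then obtain x y where "A = comp G x" "B = comp G y" by blast
    moreover have "comp G x = comp G y" if "z \<in> comp G x" "z \<in> comp G y" for z
      using comp_eq_if_mem[OF that(1)] comp_eq_if_mem[OF that(2)] by simp
    ultimately show "disjnt A B" using \<open>A \<noteq> B\<close> unfolding disjnt_def by blast
  qed
  moreover have "finite C" if "C \<in> ?C" for C
  proof -
    obtain x where "x \<in> W" "C = comp G x" using \<open>C \<in> ?C\<close> by blast
    then show ?thesis using comp_subset_W finite_subset[of C W] finite_W by simp
  qed
  ultimately have "card (\<Union>?C) = sum card ?C" by (rule card_Union_disjoint)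
  moreover have "\<Union>?C = W"
  proof
    show "\<Union>?C \<subseteq> W" using comp_subset_W by blast
    show "W \<subseteq> \<Union>?C" using comp_refl by blast
  qed
  moreover have "card ?C * k \<le> sum card ?C"
  proof -
    have "k \<le> card C" if "C \<in> ?C" for C using that W by auto
    then show ?thesis using sum_bounded_below[of ?C k card] by simp
  qed
  ultimately show ?thesis unfolding comps_meeting_def by simp
qed

definition indep_tuples :: "nat \<Rightarrow> nat set \<Rightarrow> nat set set \<Rightarrow> nat list set" where
  "indep_tuples l W G = {t. length t = l \<and> set t \<subseteq> W \<and> distinct (map (comp G) t)}"

lemma indep_tuples_not_connected:
  assumes "t \<in> indep_tuples l W G" "i < l" "j < l" "i \<noteq> j"
  shows "(t ! i, t ! j) \<notin> (adj G)\<^sup>*"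
proof
  assume "(t ! i, t ! j) \<in> (adj G)\<^sup>*"
  then have "map (comp G) t ! i = map (comp G) t ! j"
    using assms comp_eq_if_rtrancl by (simp add: indep_tuples_def)
  then show False
    using assms nth_eq_iff_index_eq[of "map (comp G) t" i j] by (simp add: indep_tuples_def)
qed

lemma comps_meeting_decreases:
  assumes "finite W" "E' \<noteq> {}"
    and edges: "\<forall>e\<in>E'. \<exists>x y. x \<in> set t \<and> y \<in> set t \<and> x \<noteq> y \<and> e = {x, y}"
    and t: "t \<in> indep_tuples l W G"
  shows "comps_meeting W (G \<union> E') < comps_meeting W G"
proof -
  obtain e where "e \<in> E'" using assms(2) by blast
  then obtain a b where ab: "a \<in> set t" "b \<in> set t" "a \<noteq> b" "{a, b} \<in> E'"
    using edges by metis
  have "inj_on (comp G) (set t)" using t by (simp add: indep_tuples_def distinct_map)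
  then have "comp G a \<noteq> comp G b" using ab(1-3) inj_onD by metis
  moreover have "(a, b) \<in> adj (G \<union> E')" using ab(4) by (simp add: adj_def)
  then have "comp (G \<union> E') a = comp (G \<union> E') b" by (intro comp_eq_if_rtrancl r_into_rtrancl)
  moreover have "a \<in> W" "b \<in> W" using ab t by (auto simp: indep_tuples_def)
  ultimately show ?thesis using comps_meeting_less[OF _ assms(1)] by blast
qed

section \<open>Counting tuples in distinct components\<close>

lemma finite_indep_tuples: "finite W \<Longrightarrow> finite (indep_tuples l W G)"
  by (rule finite_subset[OF _ finite_lists_length_eq[of W l]]) (auto simp: indep_tuples_def)

lemma Cons_mem_indep_tuples:
  assumes "t \<in> indep_tuples l W G" "x \<in> W - (\<Union>y\<in>set t. comp G y)"
  shows "x # t \<in> indep_tuples (Suc l) W G"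
proof -
  have "comp G x \<noteq> comp G y" if "y \<in> set t" for y
  proof
    assume "comp G x = comp G y"
    then have "x \<in> comp G y" using comp_refl[of x G] by simp
    then show False using assms(2) that by blast
  qed
  then show ?thesis using assms(1,2) by (auto simp: indep_tuples_def)
qed

lemma card_diff_comps_ge:
  assumes "finite W" and comps: "\<forall>y\<in>W. finite (comp G y) \<and> card (comp G y) \<le> c"
    and "set t \<subseteq> W" "length t = l"
  shows "card W - l * c \<le> card (W - (\<Union>y\<in>set t. comp G y))"
proof -
  let ?X = "\<Union>y\<in>set t. comp G y"
  have "card ?X \<le> (\<Sum>y\<in>set t. card (comp G y))" by (rule card_UN_le) simp
  also have "\<dots> \<le> (\<Sum>y\<in>set t. c)" using comps assms(3) by (intro sum_mono) auto
  also have "\<dots> = card (set t) * c" by simp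
  also have "\<dots> \<le> l * c" using card_length[of t] assms(4) by simp
  finally have "card ?X \<le> l * c" .
  moreover have "card W - card ?X \<le> card (W - ?X)"
    using comps assms(3) by (intro diff_card_le_card_Diff) auto
  ultimately show ?thesis by linarith
qed

text \<open>Choosing the entries one at a time, each new entry avoids at most \<open>i * c\<close> vertices.\<close>

lemma card_indep_tuples_ge_prod:
  assumes "finite W" and comps: "\<forall>y\<in>W. finite (comp G y) \<and> card (comp G y) \<le> c"
    and "l * c \<le> card W"
  shows "(\<Prod>i<l. real (card W) - real i * real c) \<le> real (card (indep_tuples l W G))"
  using assms(3)
proof (induction l)
  case 0
  have "indep_tuples 0 W G = {[]}" by (auto simp: indep_tuples_def)
  then show ?case by simp
next
  case (Suc l)
  let ?B = "\<lambda>t. W - (\<Union>y\<in>set t. comp G y)" and ?T = "indep_tuples l W G"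
  have lc: "l * c \<le> card W" using Suc.prems by simp
  have "card (Sigma ?T ?B) = card ((\<lambda>(t, x). x # t) ` Sigma ?T ?B)"
    by (intro card_image[symmetric]) (auto simp: inj_on_def)
  also have "\<dots> \<le> card (indep_tuples (Suc l) W G)"
    using Cons_mem_indep_tuples by (intro card_mono finite_indep_tuples assms(1)) auto
  finally have "(\<Sum>t\<in>?T. card (?B t)) \<le> card (indep_tuples (Suc l) W G)"
    using finite_indep_tuples[OF assms(1)] assms(1) by (simp add: card_SigmaI)
  moreover have "card ?T * (card W - l * c) \<le> (\<Sum>t\<in>?T. card (?B t))"
    using card_diff_comps_ge[OF assms(1) comps] sum_bounded_below[of ?T "card W - l * c"]
    by (simp add: indep_tuples_def)
  ultimately have card_Suc: "card ?T * (card W - l * c) \<le> card (indep_tuples (Suc l) W G)"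
    by linarith
  have "(\<Prod>i<Suc l. real (card W) - real i * real c)
      = (\<Prod>i<l. real (card W) - real i * real c) * real (card W - l * c)"
    using lc by (simp add: of_nat_diff)
  also have "\<dots> \<le> real (card ?T) * real (card W - l * c)"
    by (rule mult_right_mono[OF Suc.IH[OF lc]]) simp
  also have "\<dots> \<le> real (card (indep_tuples (Suc l) W G))"
    using card_Suc by (metis of_nat_le_iff of_nat_mult)
  finally show ?case .
qed

lemma prod_one_minus_ge:
  fixes a :: "'b \<Rightarrow> real"
  assumes "finite A" "\<forall>i\<in>A. 0 \<le> a i \<and> a i \<le> 1"
  shows "1 - sum a A \<le> (\<Prod>i\<in>A. 1 - a i)"
  using assms
proof (induction A rule: finite_induct)
  case (insert x F)
  have "(\<Prod>i\<in>F. 1 - a i) \<le> 1" using insert.prems by (intro prod_le_1) auto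
  then have "a x * (\<Prod>i\<in>F. 1 - a i) \<le> a x"
    using insert.prems by (simp add: mult_left_le)
  then show ?case using insert by (simp add: algebra_simps)
qed simp

lemma prod_diff_ge_half:
  fixes w c :: real
  assumes "w > 0" "c \<ge> 0" "c * real l ^ 2 \<le> w"
  shows "w ^ l / 2 \<le> (\<Prod>i<l. w - real i * c)"
proof -
  let ?a = "\<lambda>i. real i * c / w"
  have "2 * (\<Sum>i<l. real i) \<le> real l ^ 2"
    by (induction l) (simp_all add: power2_eq_square algebra_simps)
  then have "(2 * (\<Sum>i<l. real i)) * c \<le> real l ^ 2 * c"
    using assms(2) by (rule mult_right_mono)
  then have "2 * ((\<Sum>i<l. real i) * c) \<le> w"
    using assms(3) by (simp add: mult.commute mult.left_commute)
  have "sum ?a {..<l} = (\<Sum>i<l. real i) * c / w"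
    by (simp add: sum_divide_distrib sum_distrib_right)
  also have "\<dots> \<le> 1 / 2"
    using \<open>2 * ((\<Sum>i<l. real i) * c) \<le> w\<close> assms(1) by (simp add: pos_divide_le_eq)
  finally have "sum ?a {..<l} \<le> 1 / 2" .
  moreover have "\<forall>i\<in>{..<l}. 0 \<le> ?a i \<and> ?a i \<le> 1"
  proof
    fix i assume "i \<in> {..<l}"
    then have "i < l" by simp
    then have "i \<le> l * l" using le_square[of l] by linarith
    then have "real i \<le> real l ^ 2" by (simp add: power2_eq_square flip: of_nat_mult)
    then have "real i * c \<le> real l ^ 2 * c" using assms(2) by (rule mult_right_mono)
    then show "0 \<le> ?a i \<and> ?a i \<le> 1" using assms by (simp add: field_simps mult.commute)
  qed
  ultimately have "1 / 2 \<le> (\<Prod>i<l. 1 - ?a i)"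
    using prod_one_minus_ge[of "{..<l}" ?a] by simp
  then have "w ^ l / 2 \<le> w ^ l * (\<Prod>i<l. 1 - ?a i)"
    using assms(1) mult_left_mono[of "1/2" _ "w ^ l"] by simp
  also have "\<dots> = (\<Prod>i<l. w * (1 - ?a i))" by (simp add: prod.distrib)
  also have "\<dots> = (\<Prod>i<l. w - real i * c)"
    using assms(1) by (intro prod.cong) (auto simp: field_simps)
  finally show ?thesis .
qed

lemma card_indep_tuples_ge_half:
  assumes "finite W" "W \<noteq> {}" and comps: "\<forall>y\<in>W. finite (comp G y) \<and> card (comp G y) \<le> c"
    and size: "real c * real l ^ 2 \<le> real (card W)"
  shows "real (card W) ^ l / 2 \<le> real (card (indep_tuples l W G))"
proof -
  have "l * c \<le> l * l * c" by (intro mult_le_mono1 le_square)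
  then have "real (l * c) \<le> real c * real l ^ 2"
    by (simp add: power2_eq_square mult.commute mult.left_commute flip: of_nat_mult)
  then have "l * c \<le> card W" using size by linarith
  moreover have "real (card W) > 0" using assms(1,2) by (simp add: card_gt_0_iff)
  ultimately show ?thesis
    using prod_diff_ge_half[OF _ _ size] card_indep_tuples_ge_prod[OF assms(1) comps] by force
qed

section \<open>The potential\<close>

definition big_comp_vertices :: "nat \<Rightarrow> nat \<Rightarrow> nat set set \<Rightarrow> nat set" where
  "big_comp_vertices n k G = {x\<in>{1..n}. k \<le> card (comp G x)}"

lemma Nge_eq_card_big_comp_vertices: "Nge n G k = card (big_comp_vertices n k G)"
  unfolding Nge_def big_comp_vertices_def ..

lemma card_big_comp_vertices_le: "card (big_comp_vertices n k G) \<le> n"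
proof -
  have "card (big_comp_vertices n k G) \<le> card {1..n}"
    by (intro card_mono) (auto simp: big_comp_vertices_def)
  then show ?thesis by simp
qed

text \<open>Index \<open>j\<close> refers to the tuple drawn at time \<open>m + j + 1\<close>; a merging step forces the rule
  to join two components meeting \<open>W = big_comp_vertices n k (gr m)\<close>.\<close>

definition merging_step ::
  "nat \<Rightarrow> nat \<Rightarrow> nat \<Rightarrow> nat \<Rightarrow> (nat \<Rightarrow> nat set set) \<Rightarrow> (nat \<Rightarrow> nat list) \<Rightarrow> nat \<Rightarrow> bool" where
  "merging_step l n m k gr vv j \<longleftrightarrow>
     vv (m + Suc j) \<in> indep_tuples l (big_comp_vertices n k (gr m)) (gr (m + j))"

definition merging_steps ::
  "nat \<Rightarrow> nat \<Rightarrow> nat \<Rightarrow> nat \<Rightarrow> (nat \<Rightarrow> nat set set) \<Rightarrow> (nat \<Rightarrow> nat list) \<Rightarrow> nat \<Rightarrow> nat" where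
  "merging_steps l n m k gr vv j = card {i. i < j \<and> merging_step l n m k gr vv i}"

definition L1_small :: "nat \<Rightarrow> nat \<Rightarrow> real \<Rightarrow> nat set set \<Rightarrow> bool" where
  "L1_small l n \<alpha> G \<longleftrightarrow> real (L1 n G) \<le> \<alpha> / real l ^ 2 * real n"

definition merge_prob :: "nat \<Rightarrow> nat \<Rightarrow> nat set \<Rightarrow> real" where
  "merge_prob l n W = (real (card W) / real n) ^ l / 2"

text \<open>The supermartingale \<open>2^(|W|/k - S_j) (1 - p/2)^(D - j)\<close>, where \<open>S_j\<close> counts the merging
  steps so far and \<open>p = merge_prob l n W\<close>, stopped at \<open>0\<close> once \<open>L1\<close> is large and set to \<open>0\<close>
  when \<open>|W| < \<alpha> n\<close>. On the failure event it is at least \<open>1\<close> at \<open>j = D\<close>.\<close>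

definition potential ::
  "nat \<Rightarrow> nat \<Rightarrow> real \<Rightarrow> nat \<Rightarrow> nat \<Rightarrow> nat \<Rightarrow> (nat \<Rightarrow> nat set set) \<Rightarrow> (nat \<Rightarrow> nat list) \<Rightarrow> nat \<Rightarrow> real"
  where
  "potential l n \<alpha> m k D gr vv j =
     (if \<alpha> * real n \<le> real (card (big_comp_vertices n k (gr m))) \<and> L1_small l n \<alpha> (gr (m + j))
      then 2 powr (real (card (big_comp_vertices n k (gr m))) / real k - real (merging_steps l n m k gr vv j))
        * (1 - merge_prob l n (big_comp_vertices n k (gr m)) / 2) ^ (D - j)
      else 0)"

lemma merging_steps_Suc:
  "merging_steps l n m k gr vv (Suc j) = merging_steps l n m k gr vv j + of_bool (merging_step l n m k gr vv j)"
proof (cases "merging_step l n m k gr vv j")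
  case True
  then have "{i. i < Suc j \<and> merging_step l n m k gr vv i} = insert j {i. i < j \<and> merging_step l n m k gr vv i}"
    by (auto simp: less_Suc_eq)
  then show ?thesis unfolding merging_steps_def using True by simp
next
  case False
  then have "{i. i < Suc j \<and> merging_step l n m k gr vv i} = {i. i < j \<and> merging_step l n m k gr vv i}"
    by (auto simp: less_Suc_eq)
  then show ?thesis unfolding merging_steps_def using False by simp
qed

lemma merge_prob_bounds:
  "0 \<le> merge_prob l n (big_comp_vertices n k G)" "merge_prob l n (big_comp_vertices n k G) \<le> 1 / 2"
proof -
  have "real (card (big_comp_vertices n k G)) / real n \<le> 1"
    using card_big_comp_vertices_le[of n k G] by (cases "n = 0") auto
  then show "merge_prob l n (big_comp_vertices n k G) \<le> 1 / 2"
    unfolding merge_prob_def by (simp add: power_le_one)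
qed (simp add: merge_prob_def)

lemma potential_nonneg: "0 \<le> potential l n \<alpha> m k D gr vv j"
  using merge_prob_bounds(2)[of l n k "gr m"] unfolding potential_def by simp

lemma merging_steps_cong:
  assumes "\<And>i. i \<le> m + j \<Longrightarrow> gr i = gr' i" "\<And>i. 1 \<le> i \<Longrightarrow> i \<le> m + j \<Longrightarrow> vv i = vv' i"
  shows "merging_steps l n m k gr vv j = merging_steps l n m k gr' vv' j"
proof -
  have "merging_step l n m k gr vv i = merging_step l n m k gr' vv' i" if "i < j" for i
    using that assms[of m] assms(1)[of "m + i"] assms(2)[of "m + Suc i"]
    unfolding merging_step_def by simp
  then have "{i. i < j \<and> merging_step l n m k gr vv i} = {i. i < j \<and> merging_step l n m k gr' vv' i}"
    by blast
  then show ?thesis unfolding merging_steps_def by simp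
qed

lemma potential_cong:
  assumes "\<And>i. i \<le> m + j \<Longrightarrow> gr i = gr' i" "\<And>i. 1 \<le> i \<Longrightarrow> i \<le> m + j \<Longrightarrow> vv i = vv' i"
  shows "potential l n \<alpha> m k D gr vv j = potential l n \<alpha> m k D gr' vv' j"
  unfolding potential_def using merging_steps_cong[OF assms] assms(1)[of m] assms(1)[of "m + j"] by simp

lemma card_div_le_merge_prob_mult:
  assumes "n \<ge> 1" "l \<ge> 1" "k \<ge> 1" "0 < \<alpha>"
    and dense: "\<alpha> * real n \<le> real (card W)" and "card W \<le> n"
    and D: "4 / \<alpha> ^ (l - 1) * (real n / real k) \<le> real D"
  shows "real (card W) / real k \<le> merge_prob l n W / 2 * real D"
proof -
  let ?r = "real (card W) / real n"
  have "\<alpha> \<le> ?r" using dense assms(1) by (simp add: field_simps)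
  then have "?r * \<alpha> ^ (l - 1) \<le> ?r * ?r ^ (l - 1)"
    using assms(4) by (intro mult_left_mono power_mono) auto
  also have "\<dots> = ?r ^ l" using assms(2) by (simp flip: power_Suc)
  finally have r: "?r * \<alpha> ^ (l - 1) \<le> ?r ^ l" .
  have "real (card W) / real k = ?r * \<alpha> ^ (l - 1) / 4 * (4 / \<alpha> ^ (l - 1) * (real n / real k))"
    using assms(1,4) by (simp add: field_simps)
  also have "\<dots> \<le> ?r ^ l / 4 * (4 / \<alpha> ^ (l - 1) * (real n / real k))"
    using r assms(4) by (intro mult_right_mono) auto
  also have "\<dots> \<le> ?r ^ l / 4 * real D"
    using D by (intro mult_left_mono) auto
  finally show ?thesis unfolding merge_prob_def by simp
qed

lemma potential_zero_le:
  assumes n: "n \<ge> 2" and "l \<ge> 1" "k \<ge> 1" "0 < \<alpha>"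
    and k: "real k \<le> \<alpha> / 16 * (real n / ln (real n))"
    and D: "D = nat \<lceil>4 / \<alpha> ^ (l - 1) * (real n / real k)\<rceil>"
  shows "potential l n \<alpha> m k D gr vv 0 \<le> 1 / real n ^ 4"
proof (cases "\<alpha> * real n \<le> real (card (big_comp_vertices n k (gr m)))")
  case dense: True
  let ?W = "big_comp_vertices n k (gr m)"
  let ?s = "real (card ?W) / real k" and ?p = "merge_prob l n ?W"
  have "(1 - ?p / 2) ^ D \<le> exp (- (?p / 2)) ^ D"
    using merge_prob_bounds(2)[of l n k "gr m"] exp_ge_add_one_self[of "- (?p / 2)"]
    by (intro power_mono) auto
  also have "\<dots> = exp (- (?p / 2 * real D))"
    by (simp add: exp_of_nat_mult[symmetric] mult.commute)
  also have "\<dots> \<le> exp (- ?s)"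
    using card_div_le_merge_prob_mult[OF _ assms(2-4) dense card_big_comp_vertices_le] n
      real_nat_ceiling_ge[of "4 / \<alpha> ^ (l - 1) * (real n / real k)"]
    unfolding D by simp
  finally have "potential l n \<alpha> m k D gr vv 0 \<le> 2 powr ?s * exp (- ?s)"
    unfolding potential_def merging_steps_def by (simp add: mult_left_mono)
  also have "\<dots> = exp (?s * (ln 2 - 1))"
  proof -
    have "2 powr x * exp (- x) = exp (x * (ln 2 - 1))" for x :: real
      by (simp add: powr_def exp_add[symmetric] algebra_simps)
    then show ?thesis .
  qed
  also have "\<dots> \<le> exp (- 4 * ln (real n))"
  proof -
    have ln_pos: "ln (real n) > 0" using n by simp
    have "real k * (16 * ln (real n)) \<le> \<alpha> * real n"
      using mult_right_mono[OF k, of "16 * ln (real n)"] ln_pos by (simp add: field_simps)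
    then have "16 * ln (real n) \<le> \<alpha> * real n / real k"
      using assms(3) by (simp add: field_simps)
    also have "\<dots> \<le> ?s" using dense assms(3) by (intro divide_right_mono) auto
    finally have "16 * ln (real n) \<le> ?s" .
    moreover have "?s * (ln 2 - 1) \<le> ?s * (- 1 / 4)"
      using ln2_le_25_over_36 calculation ln_pos by (intro mult_left_mono) auto
    ultimately show ?thesis by simp
  qed
  also have "\<dots> = inverse (exp (ln (real n)) ^ 4)"
    by (simp add: exp_minus[symmetric] exp_of_nat_mult[symmetric])
  also have "\<dots> = 1 / real n ^ 4"
    using n by (simp add: divide_inverse)
  finally show ?thesis .
qed (simp add: potential_def)

section \<open>Histories of an \<open>l\<close>-vertex rule\<close>

definition tuples :: "nat \<Rightarrow> nat \<Rightarrow> nat list set" where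
  "tuples l n = {t. length t = l \<and> set t \<subseteq> {1..n}}"

lemma finite_tuples: "finite (tuples l n)"
  unfolding tuples_def using finite_lists_length_eq[of "{1..n}" l] by (simp add: conj_commute)

text \<open>A history of length \<open>K\<close> records the tuple and the edge set added at each of the
  steps \<open>1, \<dots>, K\<close>; it has finitely many possible values, and everything \<open>F K\<close>-measurable
  that we need is a function of it.\<close>

definition histories :: "nat \<Rightarrow> nat \<Rightarrow> nat \<Rightarrow> (nat \<Rightarrow> nat list \<times> nat set set) set" where
  "histories l n K = PiE {1..K} (\<lambda>_. tuples l n \<times> Pow (Pow {1..n}))"

definition hist_graph :: "nat \<Rightarrow> (nat \<Rightarrow> nat list \<times> nat set set) \<Rightarrow> nat set set" where
  "hist_graph j u = (\<Union>i\<in>{1..j}. snd (u i))"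

lemma finite_histories: "finite (histories l n K)"
  unfolding histories_def by (intro finite_PiE) (auto intro: finite_tuples)

locale vertex_rule =
  fixes M :: "'a measure" and l n :: nat and F :: "nat \<Rightarrow> 'a measure"
    and v :: "nat \<Rightarrow> 'a \<Rightarrow> nat list" and E :: "nat \<Rightarrow> 'a \<Rightarrow> nat set set"
  assumes rule: "ell_vertex_rule M l n F v E"
begin

sublocale prob_space M
  using rule by (simp add: ell_vertex_rule_def)

lemma subalgebra_F: "subalgebra M (F m)"
  using rule by (simp add: ell_vertex_rule_def)

lemma space_F: "space (F m) = space M"
  using subalgebra_F unfolding subalgebra_def by blast

lemma sets_F_mono: "i \<le> j \<Longrightarrow> sets (F i) \<subseteq> sets (F j)"
  using rule lift_Suc_mono_le[of "\<lambda>m. sets (F m)"] by (simp add: ell_vertex_rule_def)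

lemma v_measurable: "m \<ge> 1 \<Longrightarrow> v m \<in> measurable (F m) (count_space UNIV)"
  using rule by (simp add: ell_vertex_rule_def)

lemma E_measurable: "m \<ge> 1 \<Longrightarrow> E m \<in> measurable (F m) (count_space UNIV)"
  using rule by (simp add: ell_vertex_rule_def)

lemma v_in_tuples: "m \<ge> 1 \<Longrightarrow> \<omega> \<in> space M \<Longrightarrow> v m \<omega> \<in> tuples l n"
  using rule by (simp add: ell_vertex_rule_def tuples_def)

lemma prob_v_eq: "m \<ge> 1 \<Longrightarrow> t \<in> tuples l n \<Longrightarrow> prob {\<omega>\<in>space M. v m \<omega> = t} = 1 / real n ^ l"
  using rule by (simp add: ell_vertex_rule_def tuples_def)

lemma prob_Int_v_eq:
  "m \<ge> 1 \<Longrightarrow> A \<in> sets (F (m - 1)) \<Longrightarrow>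
    prob (A \<inter> {\<omega>\<in>space M. v m \<omega> = t}) = prob A * prob {\<omega>\<in>space M. v m \<omega> = t}"
  using rule by (simp add: ell_vertex_rule_def)

lemma E_edge:
  "m \<ge> 1 \<Longrightarrow> \<omega> \<in> space M \<Longrightarrow>
    \<forall>e\<in>E m \<omega>. \<exists>x y. x \<in> set (v m \<omega>) \<and> y \<in> set (v m \<omega>) \<and> x \<noteq> y \<and> e = {x, y}"
  using rule by (simp add: ell_vertex_rule_def)

lemma E_nonempty:
  "m \<ge> 1 \<Longrightarrow> \<omega> \<in> space M \<Longrightarrow>
    \<forall>i<l. \<forall>j<l. i \<noteq> j \<longrightarrow> (v m \<omega> ! i, v m \<omega> ! j) \<notin> (adj (Gr E (m - 1) \<omega>))\<^sup>* \<Longrightarrow>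
    E m \<omega> \<noteq> {}"
  using rule by (simp add: ell_vertex_rule_def)

lemma E_subset: "m \<ge> 1 \<Longrightarrow> \<omega> \<in> space M \<Longrightarrow> E m \<omega> \<subseteq> Pow {1..n}"
  using E_edge v_in_tuples unfolding tuples_def by fastforce

lemma Gr_edges: "\<omega> \<in> space M \<Longrightarrow> \<forall>e\<in>Gr E j \<omega>. e \<subseteq> {1..n}"
  using E_subset unfolding Gr_def by fastforce

definition history :: "nat \<Rightarrow> 'a \<Rightarrow> (nat \<Rightarrow> nat list \<times> nat set set)" where
  "history K \<omega> = restrict (\<lambda>i. (v i \<omega>, E i \<omega>)) {1..K}"

lemma history_in_histories: "\<omega> \<in> space M \<Longrightarrow> history K \<omega> \<in> histories l n K"
  unfolding history_def histories_def using v_in_tuples E_subset by auto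

lemma Gr_eq_hist_graph: "i \<le> K \<Longrightarrow> Gr E i \<omega> = hist_graph i (history K \<omega>)"
  unfolding Gr_def hist_graph_def history_def by (intro SUP_cong) auto

lemma v_eq_history: "1 \<le> i \<Longrightarrow> i \<le> K \<Longrightarrow> v i \<omega> = fst (history K \<omega> i)"
  unfolding history_def by simp

lemma history_fiber:
  assumes "u \<in> histories l n K"
  shows "{\<omega>\<in>space M. history K \<omega> = u} =
    space M \<inter> (\<Inter>i\<in>{1..K}. {\<omega>\<in>space M. v i \<omega> = fst (u i)} \<inter> {\<omega>\<in>space M. E i \<omega> = snd (u i)})"
proof -
  have "history K \<omega> = u \<longleftrightarrow> (\<forall>i\<in>{1..K}. v i \<omega> = fst (u i) \<and> E i \<omega> = snd (u i))" for \<omega>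
    using assms unfolding history_def histories_def
    by (auto simp: fun_eq_iff restrict_def PiE_def extensional_def prod_eq_iff)
  then show ?thesis by auto
qed

lemma fiber_in_sets_F:
  "i \<le> K \<Longrightarrow> f \<in> measurable (F i) (count_space UNIV) \<Longrightarrow> {\<omega>\<in>space M. f \<omega> = a} \<in> sets (F K)"
  using measurable_sets[of f "F i" "count_space UNIV" "{a}"] space_F[of i] sets_F_mono[of i K]
  by (auto simp: vimage_def Int_def conj_commute)

lemma history_fiber_sets:
  assumes u: "u \<in> histories l n K"
  shows "{\<omega>\<in>space M. history K \<omega> = u} \<in> sets (F K)"
proof -
  let ?A = "\<lambda>i. {\<omega>\<in>space M. v i \<omega> = fst (u i)} \<inter> {\<omega>\<in>space M. E i \<omega> = snd (u i)}"
  have A: "?A i \<in> sets (F K)" if "i \<in> {1..K}" for i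
    using that fiber_in_sets_F[of i K, OF _ v_measurable] fiber_in_sets_F[of i K, OF _ E_measurable]
    by (intro sets.Int) auto
  have "space M \<in> sets (F K)" using sets.top[of "F K"] space_F by simp
  moreover have "(\<Inter>i\<in>{1..K}. ?A i) \<in> sets (F K)" if "K \<noteq> 0"
    using that A by (intro sets.finite_INT) auto
  ultimately show ?thesis
    unfolding history_fiber[OF u] by (cases "K = 0") (simp_all add: sets.Int)
qed

lemma measurable_history: "history K \<in> measurable (F K) (count_space (histories l n K))"
proof -
  have "history K -` {u} \<inter> space (F K) \<in> sets (F K)" if "u \<in> histories l n K" for u
    using history_fiber_sets[OF that] space_F by (simp add: vimage_def Int_def conj_commute)
  moreover have "history K \<in> space (F K) \<rightarrow> histories l n K"
    using history_in_histories space_F by auto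
  ultimately show ?thesis using measurable_count_space_eq2[OF finite_histories] by blast
qed

lemma measurable_history_fun:
  assumes f: "\<forall>\<omega>\<in>space M. f \<omega> = \<psi> (history K \<omega>)" and \<psi>: "\<psi> \<in> histories l n K \<rightarrow> space N"
  shows "f \<in> measurable (F K) N"
proof -
  have "\<psi> \<in> measurable (count_space (histories l n K)) N" using \<psi> by simp
  then have "(\<lambda>\<omega>. \<psi> (history K \<omega>)) \<in> measurable (F K) N"
    by (rule measurable_compose[OF measurable_history])
  moreover have "f \<in> measurable (F K) N \<longleftrightarrow> (\<lambda>\<omega>. \<psi> (history K \<omega>)) \<in> measurable (F K) N"
    using f space_F by (intro measurable_cong) simp
  ultimately show ?thesis by simp
qed

lemma sets_history_pred:
  assumes "\<forall>\<omega>\<in>space M. P \<omega> = \<psi> (history K \<omega>)"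
  shows "{\<omega>\<in>space M. P \<omega>} \<in> sets M"
proof -
  have "P \<in> measurable (F K) (count_space UNIV)" by (rule measurable_history_fun[OF assms]) simp
  then have "P -` {True} \<inter> space (F K) \<in> sets (F K)" by (rule measurable_sets) simp
  then have "{\<omega>\<in>space M. P \<omega>} \<in> sets (F K)"
    using space_F by (simp add: vimage_def Int_def conj_commute)
  then show ?thesis using subalgebra_F[of K] unfolding subalgebra_def by blast
qed

lemma integrable_history_fun:
  fixes f :: "'a \<Rightarrow> real"
  assumes f: "\<forall>\<omega>\<in>space M. f \<omega> = \<psi> (history K \<omega>)"
  shows "integrable M f"
proof (rule integrable_const_bound)
  show "AE \<omega> in M. norm (f \<omega>) \<le> Max ((\<lambda>u. \<bar>\<psi> u\<bar>) ` histories l n K)"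
  proof (rule AE_I2)
    fix \<omega> assume \<omega>: "\<omega> \<in> space M"
    then have "\<bar>\<psi> (history K \<omega>)\<bar> \<le> Max ((\<lambda>u. \<bar>\<psi> u\<bar>) ` histories l n K)"
      using history_in_histories finite_histories by (intro Max_ge) auto
    then show "norm (f \<omega>) \<le> Max ((\<lambda>u. \<bar>\<psi> u\<bar>) ` histories l n K)" using f \<omega> by simp
  qed
  have "f \<in> borel_measurable (F K)" by (rule measurable_history_fun[OF f]) simp
  then show "f \<in> borel_measurable M" by (rule measurable_from_subalg[OF subalgebra_F])
qed

lemma integral_history_fun_indicator:
  fixes f :: "'a \<Rightarrow> real"
  assumes f: "\<forall>\<omega>\<in>space M. f \<omega> = \<psi> (history K \<omega>)" and B: "B \<in> sets M"
  shows "(\<integral>\<omega>. f \<omega> * indicator B \<omega> \<partial>M)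
    = (\<Sum>u\<in>histories l n K. \<psi> u * prob ({\<omega>\<in>space M. history K \<omega> = u} \<inter> B))"
proof -
  let ?A = "\<lambda>u. {\<omega>\<in>space M. history K \<omega> = u} \<inter> B"
  have A_sets: "?A u \<in> sets M" if "u \<in> histories l n K" for u
    using history_fiber_sets[OF that] subalgebra_F B by (auto simp: subalgebra_def)
  have "f \<omega> * indicator B \<omega> = (\<Sum>u\<in>histories l n K. \<psi> u * indicator (?A u) \<omega>)"
    if "\<omega> \<in> space M" for \<omega>
  proof -
    have "(\<Sum>u\<in>histories l n K. \<psi> u * indicator (?A u) \<omega>)
        = (\<Sum>u\<in>histories l n K. if u = history K \<omega> then \<psi> u * indicator B \<omega> else 0)"
      using that by (intro sum.cong) (auto simp: indicator_def)
    then show ?thesis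
      using f that history_in_histories finite_histories by simp
  qed
  then have "(\<integral>\<omega>. f \<omega> * indicator B \<omega> \<partial>M)
      = (\<integral>\<omega>. (\<Sum>u\<in>histories l n K. \<psi> u * indicator (?A u) \<omega>) \<partial>M)"
    by (rule Bochner_Integration.integral_cong[OF refl])
  also have "\<dots> = (\<Sum>u\<in>histories l n K. (\<integral>\<omega>. \<psi> u * indicator (?A u) \<omega> \<partial>M))"
    using A_sets emeasure_finite
    by (intro Bochner_Integration.integral_sum integrable_mult_right integrable_real_indicator)
      (auto simp: less_top[symmetric])
  also have "\<dots> = (\<Sum>u\<in>histories l n K. \<psi> u * prob (?A u))"
    using A_sets sets.sets_into_space by (intro sum.cong refl) (simp add: Int_absorb2)
  finally show ?thesis .
qed

lemma integral_history_fun: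
  fixes f :: "'a \<Rightarrow> real"
  assumes "\<forall>\<omega>\<in>space M. f \<omega> = \<psi> (history K \<omega>)"
  shows "(\<integral>\<omega>. f \<omega> \<partial>M) = (\<Sum>u\<in>histories l n K. \<psi> u * prob {\<omega>\<in>space M. history K \<omega> = u})"
  using integral_history_fun_indicator[OF assms sets.top]
  by (simp add: Int_absorb2 cong: Bochner_Integration.integral_cong)

lemma sets_v_eq: "{\<omega>\<in>space M. v (Suc K) \<omega> = t} \<in> sets M"
  using fiber_in_sets_F[OF order.refl v_measurable[of "Suc K"]] subalgebra_F by (auto simp: subalgebra_def)

text \<open>Here the independence of the fresh tuple from the past enters.\<close>

lemma integral_history_fun_indicator_v_eq:
  fixes f :: "'a \<Rightarrow> real"
  assumes f: "\<forall>\<omega>\<in>space M. f \<omega> = \<psi> (history K \<omega>)"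
  shows "(\<integral>\<omega>. f \<omega> * indicator {\<omega>\<in>space M. v (Suc K) \<omega> = t} \<omega> \<partial>M)
       = (\<integral>\<omega>. f \<omega> \<partial>M) * prob {\<omega>\<in>space M. v (Suc K) \<omega> = t}"
proof -
  let ?B = "{\<omega>\<in>space M. v (Suc K) \<omega> = t}" and ?A = "\<lambda>u. {\<omega>\<in>space M. history K \<omega> = u}"
  have "prob (?A u \<inter> ?B) = prob (?A u) * prob ?B" if "u \<in> histories l n K" for u
    using prob_Int_v_eq[of "Suc K" "?A u" t] history_fiber_sets[OF that] by simp
  then show ?thesis
    unfolding integral_history_fun_indicator[OF f sets_v_eq] integral_history_fun[OF f]
    by (simp add: sum_distrib_right mult.assoc)
qed

lemma integral_history_fun_indicator_v_mem:
  fixes f :: "'a \<Rightarrow> real"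
  assumes f: "\<forall>\<omega>\<in>space M. f \<omega> = \<psi> (history K \<omega>)"
    and T: "\<forall>\<omega>\<in>space M. T \<omega> = \<tau> (history K \<omega>)"
  shows "(\<integral>\<omega>. f \<omega> * indicator {\<omega>\<in>space M. v (Suc K) \<omega> \<in> T \<omega>} \<omega> \<partial>M)
       = (\<integral>\<omega>. f \<omega> * real (card (tuples l n \<inter> T \<omega>)) / real n ^ l \<partial>M)"
proof -
  let ?B = "\<lambda>t. {\<omega>\<in>space M. v (Suc K) \<omega> = t}"
  let ?h = "\<lambda>t \<omega>. f \<omega> * of_bool (t \<in> T \<omega>)"
  have h: "\<forall>\<omega>\<in>space M. ?h t \<omega> = (\<lambda>u. \<psi> u * of_bool (t \<in> \<tau> u)) (history K \<omega>)" for t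
    using f T by simp
  have int_h: "integrable M (?h t)" for t
    by (rule integrable_history_fun[OF h])
  have "f \<omega> * indicator {\<omega>\<in>space M. v (Suc K) \<omega> \<in> T \<omega>} \<omega>
      = (\<Sum>t\<in>tuples l n. ?h t \<omega> * indicator (?B t) \<omega>)" if "\<omega> \<in> space M" for \<omega>
  proof -
    have "(\<Sum>t\<in>tuples l n. ?h t \<omega> * indicator (?B t) \<omega>)
        = (\<Sum>t\<in>tuples l n. if t = v (Suc K) \<omega> then ?h t \<omega> else 0)"
      using that by (intro sum.cong) (auto simp: indicator_def)
    then show ?thesis
      using that v_in_tuples[of "Suc K" \<omega>] finite_tuples by (simp add: indicator_def)
  qed
  then have "(\<integral>\<omega>. f \<omega> * indicator {\<omega>\<in>space M. v (Suc K) \<omega> \<in> T \<omega>} \<omega> \<partial>M)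
      = (\<Sum>t\<in>tuples l n. (\<integral>\<omega>. ?h t \<omega> * indicator (?B t) \<omega> \<partial>M))"
    by (subst Bochner_Integration.integral_sum[symmetric])
      (auto intro!: integrable_real_mult_indicator sets_v_eq int_h Bochner_Integration.integral_cong)
  also have "\<dots> = (\<Sum>t\<in>tuples l n. (\<integral>\<omega>. ?h t \<omega> / real n ^ l \<partial>M))"
    using integral_history_fun_indicator_v_eq[OF h] prob_v_eq[of "Suc K"] by simp
  also have "\<dots> = (\<integral>\<omega>. (\<Sum>t\<in>tuples l n. ?h t \<omega>) / real n ^ l \<partial>M)"
    using int_h by (simp add: sum_divide_distrib)
  also have "\<dots> = (\<integral>\<omega>. f \<omega> * real (card (tuples l n \<inter> T \<omega>)) / real n ^ l \<partial>M)"
    using finite_tuples by (simp add: sum_distrib_left[symmetric] Int_def)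
  finally show ?thesis .
qed

section \<open>The supermartingale argument\<close>

abbreviation Gseq :: "'a \<Rightarrow> nat \<Rightarrow> nat set set" where
  "Gseq \<omega> \<equiv> \<lambda>i. Gr E i \<omega>"

abbreviation vseq :: "'a \<Rightarrow> nat \<Rightarrow> nat list" where
  "vseq \<omega> \<equiv> \<lambda>i. v i \<omega>"

lemma potential_history:
  "\<forall>\<omega>\<in>space M. potential l n \<alpha> m k D (Gseq \<omega>) (vseq \<omega>) j
     = (\<lambda>u. potential l n \<alpha> m k D (\<lambda>i. hist_graph i u) (\<lambda>i. fst (u i)) j) (history (m + j) \<omega>)"
  by (intro ballI potential_cong)
    (simp_all add: Gr_eq_hist_graph[of _ "m + j"] v_eq_history[of _ "m + j"])

lemma merge_prob_history:
  "m \<le> K \<Longrightarrow> \<forall>\<omega>\<in>space M. merge_prob l n (big_comp_vertices n k (Gr E m \<omega>))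
     = (\<lambda>u. merge_prob l n (big_comp_vertices n k (hist_graph m u))) (history K \<omega>)"
  by (simp add: Gr_eq_hist_graph[of m K])

lemma indep_tuples_history:
  "\<forall>\<omega>\<in>space M. indep_tuples l (big_comp_vertices n k (Gr E m \<omega>)) (Gr E (m + j) \<omega>)
     = (\<lambda>u. indep_tuples l (big_comp_vertices n k (hist_graph m u)) (hist_graph (m + j) u))
         (history (m + j) \<omega>)"
  by (simp add: Gr_eq_hist_graph[of m "m + j"] Gr_eq_hist_graph[of "m + j" "m + j"])

lemma sets_merging_step: "{\<omega>\<in>space M. merging_step l n m k (Gseq \<omega>) (vseq \<omega>) j} \<in> sets M"
proof (rule sets_history_pred, intro ballI)
  fix \<omega>
  show "merging_step l n m k (Gseq \<omega>) (vseq \<omega>) j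
    = (\<lambda>u. merging_step l n m k (\<lambda>i. hist_graph i u) (\<lambda>i. fst (u i)) j) (history (m + Suc j) \<omega>)"
    using Gr_eq_hist_graph[of m "m + Suc j" \<omega>] Gr_eq_hist_graph[of "m + j" "m + Suc j" \<omega>]
      v_eq_history[of "m + Suc j" "m + Suc j" \<omega>]
    by (simp add: merging_step_def)
qed

lemma comps_meeting_add_merging_steps_le:
  assumes \<omega>: "\<omega> \<in> space M"
  shows "comps_meeting (big_comp_vertices n k (Gr E m \<omega>)) (Gr E (m + j) \<omega>)
      + merging_steps l n m k (Gseq \<omega>) (vseq \<omega>) j
    \<le> comps_meeting (big_comp_vertices n k (Gr E m \<omega>)) (Gr E m \<omega>)"
proof (induction j)
  case (Suc j)
  let ?W = "big_comp_vertices n k (Gr E m \<omega>)"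
  have W: "finite ?W" by (simp add: big_comp_vertices_def)
  have Gr: "Gr E (m + Suc j) \<omega> = Gr E (m + j) \<omega> \<union> E (m + Suc j) \<omega>"
    using Gr_Suc[of E "m + j" \<omega>] by simp
  show ?case
  proof (cases "merging_step l n m k (Gseq \<omega>) (vseq \<omega>) j")
    case True
    then have t: "v (m + Suc j) \<omega> \<in> indep_tuples l ?W (Gr E (m + j) \<omega>)"
      by (simp add: merging_step_def)
    have "E (m + Suc j) \<omega> \<noteq> {}"
      using E_nonempty[OF _ \<omega>] indep_tuples_not_connected[OF t] by simp
    then have "comps_meeting ?W (Gr E (m + Suc j) \<omega>) < comps_meeting ?W (Gr E (m + j) \<omega>)"
      unfolding Gr using comps_meeting_decreases[OF W _ E_edge[OF _ \<omega>] t] by simp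
    then show ?thesis using Suc.IH True by (simp add: merging_steps_Suc)
  next
    case False
    have "comps_meeting ?W (Gr E (m + Suc j) \<omega>) \<le> comps_meeting ?W (Gr E (m + j) \<omega>)"
      by (rule comps_meeting_antimono[OF Gr_mono W]) simp
    then show ?thesis using Suc.IH False by (simp add: merging_steps_Suc)
  qed
qed (simp add: merging_steps_def)

lemma potential_ge_one_if_failure:
  assumes \<omega>: "\<omega> \<in> space M" and "n \<ge> 1" "k \<ge> 1" "\<alpha> > 0"
    and dense: "\<alpha> * real n \<le> real (Nge n (Gr E m \<omega>) k)"
    and small: "\<not> \<alpha> / real l ^ 2 * real n < real (L1 n (Gr E (m + D) \<omega>))"
  shows "1 \<le> potential l n \<alpha> m k D (Gseq \<omega>) (vseq \<omega>) D"
proof -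
  let ?W = "big_comp_vertices n k (Gr E m \<omega>)"
  let ?S = "merging_steps l n m k (Gseq \<omega>) (vseq \<omega>) D"
  have "\<alpha> * real n > 0" using assms(2,4) by simp
  then have "?W \<noteq> {}" using dense by (auto simp: Nge_eq_card_big_comp_vertices)
  then have "comps_meeting ?W (Gr E (m + D) \<omega>) \<ge> 1"
    by (intro comps_meeting_pos) (simp add: big_comp_vertices_def)
  then have "?S < comps_meeting ?W (Gr E m \<omega>)"
    using comps_meeting_add_merging_steps_le[OF \<omega>, of k m D] by linarith
  moreover have "comps_meeting ?W (Gr E m \<omega>) * k \<le> card ?W"
    using comps_meeting_mult_le_card[OF Gr_edges[OF \<omega>]] by (simp add: big_comp_vertices_def)
  ultimately have "?S * k < card ?W"
    using assms(3) mult_less_mono1[of ?S "comps_meeting ?W (Gr E m \<omega>)" k] by linarith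
  then have "real ?S * real k < real (card ?W)" by (metis of_nat_less_iff of_nat_mult)
  then have "real ?S \<le> real (card ?W) / real k"
    using assms(3) by (simp add: field_simps)
  then show ?thesis
    using dense small unfolding potential_def L1_small_def
    by (simp add: Nge_eq_card_big_comp_vertices ge_one_powr_ge_zero)
qed

lemma potential_Suc_le:
  assumes \<omega>: "\<omega> \<in> space M" and "n \<ge> 1"
  shows "potential l n \<alpha> m k D (Gseq \<omega>) (vseq \<omega>) (Suc j)
    \<le> potential l n \<alpha> m k (D - 1) (Gseq \<omega>) (vseq \<omega>) j
      * (1 - of_bool (merging_step l n m k (Gseq \<omega>) (vseq \<omega>) j) / 2)"
proof (cases "L1_small l n \<alpha> (Gr E (m + Suc j) \<omega>)")
  case True
  let ?W = "big_comp_vertices n k (Gr E m \<omega>)"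
  let ?x = "real (card ?W) / real k" and ?S = "merging_steps l n m k (Gseq \<omega>) (vseq \<omega>)"
  let ?q = "(1 - merge_prob l n ?W / 2) ^ (D - Suc j)"
  let ?merging = "of_bool (merging_step l n m k (Gseq \<omega>) (vseq \<omega>) j) :: real"
  have "L1 n (Gr E (m + j) \<omega>) \<le> L1 n (Gr E (m + Suc j) \<omega>)"
    using L1_mono[OF Gr_mono Gr_edges[OF \<omega>] assms(2)] by simp
  then have "L1_small l n \<alpha> (Gr E (m + j) \<omega>)"
    using True unfolding L1_small_def by linarith
  moreover have "D - 1 - j = D - Suc j" by simp
  ultimately have pot_j: "potential l n \<alpha> m k (D - 1) (Gseq \<omega>) (vseq \<omega>) j
      = (if \<alpha> * real n \<le> real (card ?W) then 2 powr (?x - real (?S j)) * ?q else 0)"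
    unfolding potential_def by simp
  have "2 powr (?x - real (?S (Suc j))) = 2 powr (?x - real (?S j)) * (1 - ?merging / 2)"
    by (cases "merging_step l n m k (Gseq \<omega>) (vseq \<omega>) j")
      (simp_all add: merging_steps_Suc powr_diff powr_add)
  then show ?thesis
    using True unfolding pot_j by (simp add: potential_def mult_ac)
next
  case False
  then show ?thesis
    using potential_nonneg[of l n \<alpha> m k "D - 1" "Gseq \<omega>" "vseq \<omega>" j]
    by (auto simp: potential_def)
qed

text \<open>Where the potential is positive, at least the fraction \<open>merge_prob\<close> of all tuples
  is merging: components have at most \<open>L1 \<le> \<alpha> n / l\<^sup>2 \<le> |W| / l\<^sup>2\<close> vertices.\<close>

lemma merge_prob_le_indep_fraction:
  assumes \<omega>: "\<omega> \<in> space M" and "n \<ge> 1" "\<alpha> > 0"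
    and dense: "\<alpha> * real n \<le> real (card (big_comp_vertices n k (Gr E m \<omega>)))"
    and small: "L1_small l n \<alpha> (Gr E (m + j) \<omega>)"
  shows "merge_prob l n (big_comp_vertices n k (Gr E m \<omega>))
    \<le> real (card (tuples l n \<inter> indep_tuples l (big_comp_vertices n k (Gr E m \<omega>)) (Gr E (m + j) \<omega>)))
      / real n ^ l"
proof -
  let ?W = "big_comp_vertices n k (Gr E m \<omega>)" and ?G = "Gr E (m + j) \<omega>"
  have W: "finite ?W" "?W \<subseteq> {1..n}" by (auto simp: big_comp_vertices_def)
  have "\<alpha> * real n > 0" using assms(2,3) by simp
  then have "?W \<noteq> {}" using dense by auto
  moreover have "real (L1 n ?G) * real l ^ 2 \<le> real (card ?W)"
    using small dense unfolding L1_small_def by (cases "l = 0") (simp_all add: field_simps)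
  moreover have "\<forall>y\<in>?W. finite (comp ?G y) \<and> card (comp ?G y) \<le> L1 n ?G"
    using finite_comp[OF Gr_edges[OF \<omega>]] card_comp_le_L1 W(2) by blast
  ultimately have "real (card ?W) ^ l / 2 \<le> real (card (indep_tuples l ?W ?G))"
    using card_indep_tuples_ge_half[OF W(1)] by blast
  moreover have "tuples l n \<inter> indep_tuples l ?W ?G = indep_tuples l ?W ?G"
    using W(2) by (auto simp: tuples_def indep_tuples_def)
  ultimately have "real (card ?W) ^ l / 2 \<le> real (card (tuples l n \<inter> indep_tuples l ?W ?G))"
    by simp
  then have "real (card ?W) ^ l / 2 / real n ^ l
      \<le> real (card (tuples l n \<inter> indep_tuples l ?W ?G)) / real n ^ l"
    by (rule divide_right_mono) simp
  then show ?thesis unfolding merge_prob_def by (simp add: power_divide)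
qed

lemma potential_mult_merge_prob_le:
  assumes \<omega>: "\<omega> \<in> space M" and "n \<ge> 1" "\<alpha> > 0"
  shows "potential l n \<alpha> m k D (Gseq \<omega>) (vseq \<omega>) j * merge_prob l n (big_comp_vertices n k (Gr E m \<omega>))
    \<le> potential l n \<alpha> m k D (Gseq \<omega>) (vseq \<omega>) j *
      (real (card (tuples l n \<inter> indep_tuples l (big_comp_vertices n k (Gr E m \<omega>)) (Gr E (m + j) \<omega>)))
        / real n ^ l)"
proof (cases "\<alpha> * real n \<le> real (card (big_comp_vertices n k (Gr E m \<omega>)))
    \<and> L1_small l n \<alpha> (Gr E (m + j) \<omega>)")
  case True
  then show ?thesis
    using merge_prob_le_indep_fraction[OF \<omega> assms(2,3)] potential_nonneg
    by (intro mult_left_mono) auto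
qed (auto simp: potential_def)

lemma integrable_potential: "integrable M (\<lambda>\<omega>. potential l n \<alpha> m k D (Gseq \<omega>) (vseq \<omega>) j)"
  by (rule integrable_history_fun[OF potential_history])

lemma integral_potential_Suc_le:
  assumes "n \<ge> 1" "\<alpha> > 0" "j < D"
  shows "(\<integral>\<omega>. potential l n \<alpha> m k D (Gseq \<omega>) (vseq \<omega>) (Suc j) \<partial>M)
    \<le> (\<integral>\<omega>. potential l n \<alpha> m k D (Gseq \<omega>) (vseq \<omega>) j \<partial>M)"
proof -
  let ?g = "\<lambda>\<omega>. potential l n \<alpha> m k (D - 1) (Gseq \<omega>) (vseq \<omega>) j"
  let ?X = "{\<omega>\<in>space M. merging_step l n m k (Gseq \<omega>) (vseq \<omega>) j}"
  let ?W = "\<lambda>\<omega>. big_comp_vertices n k (Gr E m \<omega>)"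
  let ?p = "\<lambda>\<omega>. merge_prob l n (?W \<omega>)"
  let ?c = "\<lambda>\<omega>. real (card (tuples l n \<inter> indep_tuples l (?W \<omega>) (Gr E (m + j) \<omega>))) / real n ^ l"
  have g: "\<forall>\<omega>\<in>space M. ?g \<omega> = (\<lambda>u. potential l n \<alpha> m k (D - 1) (\<lambda>i. hist_graph i u) (\<lambda>i. fst (u i)) j)
    (history (m + j) \<omega>)"
    by (rule potential_history)
  have gp: "\<forall>\<omega>\<in>space M. ?g \<omega> * ?p \<omega> = (\<lambda>u. potential l n \<alpha> m k (D - 1) (\<lambda>i. hist_graph i u)
    (\<lambda>i. fst (u i)) j * merge_prob l n (big_comp_vertices n k (hist_graph m u))) (history (m + j) \<omega>)"
    using g merge_prob_history[of m "m + j"] by simp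
  have gc: "\<forall>\<omega>\<in>space M. ?g \<omega> * ?c \<omega> = (\<lambda>u. potential l n \<alpha> m k (D - 1) (\<lambda>i. hist_graph i u)
    (\<lambda>i. fst (u i)) j * (real (card (tuples l n \<inter> indep_tuples l (big_comp_vertices n k (hist_graph m u))
      (hist_graph (m + j) u))) / real n ^ l)) (history (m + j) \<omega>)"
    using g indep_tuples_history[of k m j] by simp
  note int_g = integrable_potential and int_gp = integrable_history_fun[OF gp]
    and int_gc = integrable_history_fun[OF gc]
  have int_gX: "integrable M (\<lambda>\<omega>. ?g \<omega> * indicator ?X \<omega>)"
    by (intro integrable_real_mult_indicator sets_merging_step int_g)
  have "(\<integral>\<omega>. potential l n \<alpha> m k D (Gseq \<omega>) (vseq \<omega>) (Suc j) \<partial>M)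
      \<le> (\<integral>\<omega>. ?g \<omega> - ?g \<omega> * indicator ?X \<omega> / 2 \<partial>M)"
    using potential_Suc_le[OF _ assms(1), of _ \<alpha> m k D j] int_g int_gX
    by (intro integral_mono) (auto simp: indicator_def algebra_simps)
  also have "\<dots> = (\<integral>\<omega>. ?g \<omega> \<partial>M) - (\<integral>\<omega>. ?g \<omega> * ?c \<omega> \<partial>M) / 2"
    using int_g int_gX integral_history_fun_indicator_v_mem[OF g indep_tuples_history[of k m j]]
    by (simp add: merging_step_def mult.assoc)
  also have "\<dots> \<le> (\<integral>\<omega>. ?g \<omega> \<partial>M) - (\<integral>\<omega>. ?g \<omega> * ?p \<omega> \<partial>M) / 2"
  proof -
    have "(\<integral>\<omega>. ?g \<omega> * ?p \<omega> \<partial>M) \<le> (\<integral>\<omega>. ?g \<omega> * ?c \<omega> \<partial>M)"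
      using int_gp int_gc potential_mult_merge_prob_le[OF _ assms(1,2)] by (intro integral_mono) auto
    then show ?thesis by linarith
  qed
  also have "\<dots> = (\<integral>\<omega>. ?g \<omega> * (1 - ?p \<omega> / 2) \<partial>M)"
    using int_g int_gp by (simp add: algebra_simps)
  also have "\<dots> = (\<integral>\<omega>. potential l n \<alpha> m k D (Gseq \<omega>) (vseq \<omega>) j \<partial>M)"
  proof (rule Bochner_Integration.integral_cong[OF refl])
    fix \<omega>
    have "D - j = Suc (D - 1 - j)" using assms(3) by simp
    then show "?g \<omega> * (1 - ?p \<omega> / 2) = potential l n \<alpha> m k D (Gseq \<omega>) (vseq \<omega>) j"
      by (auto simp: potential_def mult_ac)
  qed
  finally show ?thesis .
qed

lemma integral_potential_le_zero:
  assumes "n \<ge> 1" "\<alpha> > 0"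
  shows "j \<le> D \<Longrightarrow> (\<integral>\<omega>. potential l n \<alpha> m k D (Gseq \<omega>) (vseq \<omega>) j \<partial>M)
    \<le> (\<integral>\<omega>. potential l n \<alpha> m k D (Gseq \<omega>) (vseq \<omega>) 0 \<partial>M)"
proof (induction j)
  case (Suc j)
  then show ?case using integral_potential_Suc_le[OF assms, where j = j and D = D and m = m and k = k]
    by simp
qed simp

definition failure :: "real \<Rightarrow> nat \<Rightarrow> nat \<Rightarrow> nat \<Rightarrow> 'a set" where
  "failure \<alpha> m k D = {\<omega>\<in>space M. \<alpha> * real n \<le> real (Nge n (Gr E m \<omega>) k) \<and>
      \<not> \<alpha> / real l ^ 2 * real n < real (L1 n (Gr E (m + D) \<omega>))}"

lemma sets_failure: "failure \<alpha> m k D \<in> sets M"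
  unfolding failure_def
proof (rule sets_history_pred, intro ballI)
  fix \<omega>
  show "(\<alpha> * real n \<le> real (Nge n (Gr E m \<omega>) k) \<and>
      \<not> \<alpha> / real l ^ 2 * real n < real (L1 n (Gr E (m + D) \<omega>))) =
    (\<lambda>u. \<alpha> * real n \<le> real (Nge n (hist_graph m u) k) \<and>
      \<not> \<alpha> / real l ^ 2 * real n < real (L1 n (hist_graph (m + D) u))) (history (m + D) \<omega>)"
    by (simp add: Gr_eq_hist_graph[of m "m + D"] Gr_eq_hist_graph[of "m + D" "m + D"])
qed

lemma prob_failure_le:
  assumes "n \<ge> 1" "\<alpha> > 0" "k \<ge> 1"
  shows "prob (failure \<alpha> m k D) \<le> (\<integral>\<omega>. potential l n \<alpha> m k D (Gseq \<omega>) (vseq \<omega>) 0 \<partial>M)"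
proof -
  have "prob (failure \<alpha> m k D) = (\<integral>\<omega>. indicator (failure \<alpha> m k D) \<omega> \<partial>M)"
    using sets_failure by (simp add: Int_absorb2 failure_def)
  also have "\<dots> \<le> (\<integral>\<omega>. potential l n \<alpha> m k D (Gseq \<omega>) (vseq \<omega>) D \<partial>M)"
  proof (rule integral_mono)
    show "integrable M (indicator (failure \<alpha> m k D) :: 'a \<Rightarrow> real)"
      using sets_failure emeasure_finite by (intro integrable_real_indicator) (auto simp: less_top[symmetric])
    show "indicator (failure \<alpha> m k D) \<omega> \<le> potential l n \<alpha> m k D (Gseq \<omega>) (vseq \<omega>) D"
      if "\<omega> \<in> space M" for \<omega>
      using potential_ge_one_if_failure[OF that assms(1,3,2)] potential_nonneg
      by (auto simp: indicator_def failure_def)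
  qed (rule integrable_potential)
  also have "\<dots> \<le> (\<integral>\<omega>. potential l n \<alpha> m k D (Gseq \<omega>) (vseq \<omega>) 0 \<partial>M)"
    by (rule integral_potential_le_zero[OF assms(1,2) order.refl])
  finally show ?thesis .
qed

end

section \<open>Union bound\<close>

lemma admissible_pairs_subset:
  fixes \<alpha> :: real
  assumes "n \<ge> 2" "\<alpha> \<le> 1"
  shows "{(m, k). m \<le> n ^ 2 \<and> 1 \<le> k \<and> real k \<le> \<alpha> / 16 * (real n / ln (real n))}
    \<subseteq> {..n ^ 2} \<times> {1..n div 8}"
proof
  fix p assume "p \<in> {(m, k). m \<le> n ^ 2 \<and> 1 \<le> k \<and> real k \<le> \<alpha> / 16 * (real n / ln (real n))}"
  then obtain m k where p: "p = (m, k)" "m \<le> n ^ 2" "1 \<le> k"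
    and k: "real k \<le> \<alpha> / 16 * (real n / ln (real n))" by blast
  have "ln 2 \<le> ln (real n)" using assms(1) by simp
  then have ln: "1 / 2 \<le> ln (real n)" using ln2_ge_two_thirds by linarith
  have "\<alpha> / 16 * (real n / ln (real n)) \<le> 1 / 16 * (real n / (1 / 2))"
    using assms ln by (intro mult_mono divide_left_mono) auto
  then have "real (k * 8) \<le> real n" using k by simp
  then have "k * 8 \<le> n" by (simp only: of_nat_le_iff)
  then have "k \<le> n div 8" by (simp add: less_eq_div_iff_mult_less_eq)
  then show "p \<in> {..n ^ 2} \<times> {1..n div 8}" using p by simp
qed

lemma card_admissible_pairs_le:
  fixes \<alpha> :: real
  assumes "n \<ge> 2" "\<alpha> \<le> 1"
  shows "card {(m, k). m \<le> n ^ 2 \<and> 1 \<le> k \<and> real k \<le> \<alpha> / 16 * (real n / ln (real n))} \<le> n ^ 3"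
proof -
  have "(n ^ 2 + 1) * (n div 8) \<le> (8 * n ^ 2) * (n div 8)"
    using assms(1) by (intro mult_right_mono) (simp_all add: power2_eq_square)
  also have "\<dots> \<le> n ^ 2 * n"
    using times_div_less_eq_dividend[of 8 n] by (simp add: mult.assoc)
  finally have "card ({..n ^ 2} \<times> {1..n div 8}) \<le> n ^ 3"
    by (simp add: card_cartesian_product power3_eq_cube power2_eq_square mult.assoc)
  then show ?thesis
    using card_mono[OF _ admissible_pairs_subset[OF assms]] by fastforce
qed

context vertex_rule
begin

lemma event_C_eq_Diff_failures:
  "{\<omega>\<in>space M. event_C n l \<alpha> E \<omega>} = space M -
    (\<Union>(m, k)\<in>{(m, k). m \<le> n ^ 2 \<and> 1 \<le> k \<and> real k \<le> \<alpha> / 16 * (real n / ln (real n))}.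
      failure \<alpha> m k (nat \<lceil>4 / \<alpha> ^ (l - 1) * (real n / real k)\<rceil>))"
  unfolding event_C_def failure_def by auto

lemma prob_failure_le_inverse_power:
  assumes "n \<ge> 2" "l \<ge> 1" "k \<ge> 1" "0 < \<alpha>"
    and "real k \<le> \<alpha> / 16 * (real n / ln (real n))"
  shows "prob (failure \<alpha> m k (nat \<lceil>4 / \<alpha> ^ (l - 1) * (real n / real k)\<rceil>)) \<le> 1 / real n ^ 4"
proof -
  let ?D = "nat \<lceil>4 / \<alpha> ^ (l - 1) * (real n / real k)\<rceil>"
  have "prob (failure \<alpha> m k ?D) \<le> (\<integral>\<omega>. potential l n \<alpha> m k ?D (Gseq \<omega>) (vseq \<omega>) 0 \<partial>M)"
    using assms by (intro prob_failure_le) auto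
  also have "\<dots> \<le> (\<integral>\<omega>. 1 / real n ^ 4 \<partial>M)"
    using potential_zero_le[OF assms(1-5) refl] by (intro integral_mono integrable_potential) auto
  finally show ?thesis by (simp add: prob_space)
qed

end

theorem lemma1:
  fixes M :: "'a measure" and l n :: nat and F :: "nat \<Rightarrow> 'a measure"
    and v :: "nat \<Rightarrow> 'a \<Rightarrow> nat list" and E :: "nat \<Rightarrow> 'a \<Rightarrow> nat set set" and \<alpha> :: real
  assumes "l \<ge> 2" and "n \<ge> 1"
    and "ell_vertex_rule M l n F v E"
    and "0 < \<alpha>" and "\<alpha> \<le> 1"
  shows "measure M {\<omega> \<in> space M. event_C n l \<alpha> E \<omega>} \<ge> 1 - 1 / real n"
proof (cases "n = 1")
  case False
  interpret vertex_rule M l n F v E by unfold_locales (rule assms(3))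
  let ?P = "{(m, k). m \<le> n ^ 2 \<and> 1 \<le> k \<and> real k \<le> \<alpha> / 16 * (real n / ln (real n))}"
  let ?fail = "\<lambda>(m, k). failure \<alpha> m k (nat \<lceil>4 / \<alpha> ^ (l - 1) * (real n / real k)\<rceil>)"
  have n: "n \<ge> 2" using assms(2) False by simp
  have P: "finite ?P" using admissible_pairs_subset[OF n assms(5)] finite_subset by blast
  have "prob (\<Union>p\<in>?P. ?fail p) \<le> (\<Sum>p\<in>?P. prob (?fail p))"
    using P sets_failure by (intro finite_measure_subadditive_finite) auto
  also have "\<dots> \<le> (\<Sum>p\<in>?P. 1 / real n ^ 4)"
    using prob_failure_le_inverse_power[OF n _ _ assms(4)] assms(1) by (intro sum_mono) auto
  also have "\<dots> \<le> real n ^ 3 / real n ^ 4"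
    using card_admissible_pairs_le[OF n assms(5)] by (simp add: divide_right_mono flip: of_nat_power)
  also have "\<dots> = 1 / real n" using n by (simp add: field_simps power_eq_if)
  finally show ?thesis
    unfolding event_C_eq_Diff_failures using P sets_failure by (subst prob_compl) auto
qed simp

end
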